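(* Let $w$ be a word over $\Sigma$ and let $(h_1,p_1)<(h_2,p_2)<\cdots<(h_s,p_s)$ be Abelian periods of $w$ such that $(|w|-h_i)\bmod p_i=t$ for all $1\le i\le s$, for a common integer $t>0$. Then for every letter $a\in\Sigma$: if $(h_1,p_1)$ is an Abelian period of $wa$, then $(h_2,p_2),\dots,(h_s,p_s)$ are also Abelian periods of $wa$.
   Context: Words are finite sequences over a finite alphabet $\Sigma=\{a_1,\dots,a_\sigma\}$; $wa$ denotes $w$ followed by the letter $a$. The Parikh vector of a word $u$ is $\mathcal{P}_u=(|u|_{a_1},\dots,|u|_{a_\sigma})$, where $|u|_a$ is the number of occurrences of $a$ in $u$; its norm is $|\mathcal{P}_u|=|u|$. $\mathcal{P}\subset\mathcal{Q}$ means $\mathcal{P}[j]\le\mathcal{Q}[j]$ for all $j$ and $|\mathcal{P}|<|\mathcal{Q}|$. A word $w$ has Abelian period $(h,p)$ (integers $h\ge0$, $p\ge1$) if $w=u_0u_1\cdots u_{k-1}u_k$ for some $k\ge 2$ (with $u_0,u_k$ possibly empty) with $|u_0|=h$, $|u_1|=p$ and $\mathcal{P}_{u_0}\subset\mathcal{P}_{u_1}=\cdots=\mathcal{P}_{u_{k-1}}\supset\mathcal{P}_{u_k}$; the tail $u_k$ then has length $(|w|-h)\bmod p$. Pairs are ordered by $(h,p)<(h',p')$ iff $p<p'$, or $p=p'$ and $h<h'$. *)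

theory Defs
  imports Main
begin

definition parikh :: "'a list \<Rightarrow> ('a \<Rightarrow> nat)" where
  "parikh u = (\<lambda>c. count_list u c)"

definition parikh_sub :: "'a list \<Rightarrow> 'a list \<Rightarrow> bool" where
  "parikh_sub u v \<longleftrightarrow> (\<forall>c. parikh u c \<le> parikh v c) \<and> length u < length v"

text \<open>w has Abelian period (h,p): w = u_0 u_1 ... u_k with k \<ge> 2, |u_0| = h, |u_1| = p,
  P(u_0) \<subset> P(u_1) = ... = P(u_{k-1}) \<supset> P(u_k).\<close>
definition abelian_period :: "'a list \<Rightarrow> nat \<Rightarrow> nat \<Rightarrow> bool" where
  "abelian_period w h p \<longleftrightarrow> p \<ge> 1 \<and>
     (\<exists>us k. k \<ge> 2 \<and> length us = Suc k \<and> concat us = w \<and>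
        length (us ! 0) = h \<and> length (us ! 1) = p \<and>
        parikh_sub (us ! 0) (us ! 1) \<and>
        (\<forall>i. 1 \<le> i \<and> i < k \<longrightarrow> parikh (us ! i) = parikh (us ! 1)) \<and>
        parikh_sub (us ! k) (us ! 1))"

definition ap_less :: "nat \<times> nat \<Rightarrow> nat \<times> nat \<Rightarrow> bool" where
  "ap_less x y \<longleftrightarrow> snd x < snd y \<or> (snd x = snd y \<and> fst x < fst y)"

end

theory Submission imports Defs "HOL-Library.Multiset" begin

text \<open>Once \<open>(h, p)\<close> is fixed, the lengths force the factorisation
  \<open>w = u\<^sub>0 u\<^sub>1 \<cdots> u\<^sub>k\<close>: its tail \<open>v\<close> consists of the last \<open>t = (|w| - h) mod p\<close> letters,
  and the last full block is the factor of length \<open>p\<close> ending just before \<open>v\<close>.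
  Appending \<open>a\<close> keeps \<open>(h, p)\<close> an Abelian period exactly when \<open>va\<close> still fits into a block,
  i.e. when \<open>|v|\<^sub>a\<close> is smaller than the number of \<open>a\<close>'s in that last block (if \<open>|v| + 1 = p\<close>,
  then \<open>va\<close> becomes a new full block).  All periods \<open>(h\<^sub>i, p\<^sub>i)\<close> share the tail \<open>v\<close>, and the
  number of \<open>a\<close>'s in the factor of length \<open>p\<close> ending before \<open>v\<close> grows with \<open>p\<close>; as
  \<open>p\<^sub>1 \<le> p\<^sub>i\<close>, the condition for \<open>(h\<^sub>1, p\<^sub>1)\<close> implies that for \<open>(h\<^sub>i, p\<^sub>i)\<close>.\<close>

lemma parikh_eq_iff_mset_eq: "parikh u = parikh v \<longleftrightarrow> mset u = mset v"
  by (simp add: parikh_def fun_eq_iff multiset_eq_iff count_mset)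

lemma length_eq_if_parikh_eq: "parikh u = parikh v \<Longrightarrow> length u = length v"
  by (metis parikh_eq_iff_mset_eq size_mset)

lemma parikh_eq_if_le_length_eq:
  assumes "\<forall>c. parikh u c \<le> parikh v c" and "length u = length v"
  shows "parikh u = parikh v"
proof -
  have "mset u \<subseteq># mset v"
    using assms(1) by (simp add: subseteq_mset_def parikh_def flip: count_mset)
  with assms(2) show ?thesis
    by (metis parikh_eq_iff_mset_eq size_mset subset_mset.le_less mset_subset_size less_irrefl)
qed

lemma count_list_le_if_parikh_sub: "parikh_sub u v \<Longrightarrow> count_list u c \<le> count_list v c"
  by (simp add: parikh_sub_def parikh_def)

lemma count_list_drop_antimono:
  assumes "i \<le> j" shows "count_list (drop j xs) a \<le> count_list (drop i xs) a"
proof -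
  have "drop j xs = drop (j - i) (drop i xs)" using assms by simp
  then show ?thesis by (metis append_take_drop_id count_list_append le_add2)
qed

lemma length_concat_uniform: "\<forall>u\<in>set ms. length u = p \<Longrightarrow> length (concat ms) = length ms * p"
  by (induction ms) auto

lemma length_concat_uniform_ge:
  "\<forall>u\<in>set ms. length u = p \<Longrightarrow> ms \<noteq> [] \<Longrightarrow> p \<le> length (concat ms)"
  by (cases ms) auto

lemma hd_concat_uniform:
  "\<forall>u\<in>set ms. length u = p \<Longrightarrow> ms \<noteq> [] \<Longrightarrow> hd ms = take p (concat ms)"
  by (cases ms) auto

lemma last_concat_uniform:
  "\<forall>u\<in>set ms. length u = p \<Longrightarrow> ms \<noteq> [] \<Longrightarrow>
    last ms = drop (length (concat ms) - p) (concat ms)"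
  by (induction ms rule: rev_induct) auto

definition abelian_decomposition :: "nat \<Rightarrow> nat \<Rightarrow> 'a list \<Rightarrow> 'a list list \<Rightarrow> 'a list \<Rightarrow> bool" where
  "abelian_decomposition h p u0 ms uk \<longleftrightarrow>
     length u0 = h \<and> ms \<noteq> [] \<and> length (hd ms) = p \<and> (\<forall>u\<in>set ms. parikh u = parikh (hd ms)) \<and>
     parikh_sub u0 (hd ms) \<and> parikh_sub uk (hd ms)"

lemma abelian_decompositionD:
  assumes "abelian_decomposition h p u0 ms uk"
  shows "length u0 = h" and "ms \<noteq> []" and "length (hd ms) = p"
    and "u \<in> set ms \<Longrightarrow> parikh u = parikh (hd ms)"
    and "parikh_sub u0 (hd ms)" and "parikh_sub uk (hd ms)"
  using assms unfolding abelian_decomposition_def by blast+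

lemma abelian_period_iff_decomposition:
  "abelian_period x h p \<longleftrightarrow>
    (\<exists>u0 ms uk. x = u0 @ concat ms @ uk \<and> abelian_decomposition h p u0 ms uk)"
proof
  assume "abelian_period x h p"
  then obtain us k where "k \<ge> 2" and len: "length us = Suc k" and x: "concat us = x"
    and "length (us ! 0) = h" "length (us ! 1) = p" "parikh_sub (us ! 0) (us ! 1)"
    and mid: "\<forall>i. 1 \<le> i \<and> i < k \<longrightarrow> parikh (us ! i) = parikh (us ! 1)"
    and "parikh_sub (us ! k) (us ! 1)"
    unfolding abelian_period_def by blast
  obtain u0 rest where "us = u0 # rest" using len by (cases us) auto
  moreover from this have "rest \<noteq> []" using len \<open>k \<ge> 2\<close> by auto
  then obtain ms uk where "rest = ms @ [uk]" by (cases rest rule: rev_cases) auto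
  ultimately have us: "us = u0 # ms @ [uk]" and lms: "length ms = k - 1"
    using len by auto
  have ms_nth: "us ! Suc j = ms ! j" if "j < k - 1" for j
    using that lms by (simp add: us nth_append)
  have "ms \<noteq> []" using lms \<open>k \<ge> 2\<close> by auto
  then have hd: "hd ms = us ! 1" using ms_nth[of 0] lms \<open>k \<ge> 2\<close> by (simp add: hd_conv_nth)
  have "parikh (ms ! j) = parikh (hd ms)" if "j < length ms" for j
    using mid[rule_format, of "Suc j"] ms_nth[of j] that lms hd by simp
  then have "\<forall>u\<in>set ms. parikh u = parikh (hd ms)" by (auto simp: in_set_conv_nth)
  moreover have "us ! k = uk" using lms \<open>k \<ge> 2\<close> by (simp add: us nth_append)
  ultimately have "abelian_decomposition h p u0 ms uk"
    using \<open>ms \<noteq> []\<close> hd \<open>length (us ! 0) = h\<close> \<open>length (us ! 1) = p\<close> \<open>parikh_sub (us ! 0) (us ! 1)\<close>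
      \<open>parikh_sub (us ! k) (us ! 1)\<close>
    by (simp add: abelian_decomposition_def us)
  moreover have "x = u0 @ concat ms @ uk" using x by (simp add: us)
  ultimately show "\<exists>u0 ms uk. x = u0 @ concat ms @ uk \<and> abelian_decomposition h p u0 ms uk"
    by blast
next
  assume "\<exists>u0 ms uk. x = u0 @ concat ms @ uk \<and> abelian_decomposition h p u0 ms uk"
  then obtain u0 ms uk where x: "x = u0 @ concat ms @ uk" and d: "abelian_decomposition h p u0 ms uk"
    by blast
  note decomp = abelian_decompositionD[OF d]
  define us where "us = u0 # ms @ [uk]"
  have us1: "us ! 1 = hd ms" using decomp(2) by (cases ms) (simp_all add: us_def)
  have mid: "parikh (us ! i) = parikh (us ! 1)" if "1 \<le> i" "i < Suc (length ms)" for i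
  proof -
    have "us ! i \<in> set ms" using that by (cases i) (simp_all add: us_def nth_append)
    then show ?thesis using decomp(4) us1 by simp
  qed
  have "p \<ge> 1" using decomp(3,5) by (simp add: parikh_sub_def)
  moreover have "us ! Suc (length ms) = uk" by (simp add: us_def nth_append)
  ultimately show "abelian_period x h p"
    unfolding abelian_period_def using decomp(1,2,3,5,6) x us1 mid
    by (intro conjI exI[of _ us] exI[of _ "Suc (length ms)"]) (simp_all add: us_def Suc_le_eq)
qed

lemma abelian_decomposition_lengths:
  assumes "abelian_decomposition h p u0 ms uk"
  shows "\<forall>u\<in>set ms. length u = p" and "length uk < p"
  using abelian_decompositionD(3,6)[OF assms]
    length_eq_if_parikh_eq[OF abelian_decompositionD(4)[OF assms]]
  by (simp_all add: parikh_sub_def)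

lemma abelian_decomposition_div_mod:
  assumes x: "x = u0 @ concat ms @ uk" and d: "abelian_decomposition h p u0 ms uk"
  shows "length ms = (length x - h) div p" and "length uk = (length x - h) mod p"
proof -
  have "length x - h = length uk + length ms * p"
    using x abelian_decompositionD(1)[OF d] abelian_decomposition_lengths(1)[OF d]
    by (simp add: length_concat_uniform)
  then show "length ms = (length x - h) div p" "length uk = (length x - h) mod p"
    using abelian_decomposition_lengths(2)[OF d] by simp_all
qed

lemma abelian_decomposition_snoc:
  assumes d: "abelian_decomposition h p u0 ms uk"
    and lt: "count_list uk a < count_list (last ms) a"
  shows "abelian_period (u0 @ concat ms @ uk @ [a]) h p"
proof -
  note decomp = abelian_decompositionD[OF d]
  have "parikh (last ms) = parikh (hd ms)" by (rule decomp(4)[OF last_in_set[OF decomp(2)]])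
  then have lt_hd: "count_list uk a < count_list (hd ms) a"
    using lt by (simp add: parikh_def fun_eq_iff)
  have le: "\<forall>c. parikh (uk @ [a]) c \<le> parikh (hd ms) c"
  proof
    fix c
    show "parikh (uk @ [a]) c \<le> parikh (hd ms) c"
      using count_list_le_if_parikh_sub[OF decomp(6), of c] lt_hd
      by (cases "c = a") (simp_all add: parikh_def)
  qed
  consider "length uk + 1 < p" | "length uk + 1 = p"
    using abelian_decomposition_lengths(2)[OF d] by linarith
  then show ?thesis
  proof cases
    case 1
    then have "parikh_sub (uk @ [a]) (hd ms)" using le decomp(3) by (simp add: parikh_sub_def)
    then have "abelian_decomposition h p u0 ms (uk @ [a])"
      using d unfolding abelian_decomposition_def by blast
    then show ?thesis unfolding abelian_period_iff_decomposition by blast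
  next
    case 2
    then have "parikh (uk @ [a]) = parikh (hd ms)"
      using parikh_eq_if_le_length_eq[OF le] decomp(3) by simp
    moreover have "hd (ms @ [uk @ [a]]) = hd ms" using decomp(2) by simp
    moreover have "parikh_sub [] (hd ms)" using decomp(3) 2 by (simp add: parikh_sub_def parikh_def)
    ultimately have "abelian_decomposition h p u0 (ms @ [uk @ [a]]) []"
      using decomp(1,2,3,5) unfolding abelian_decomposition_def by (auto dest: decomp(4))
    moreover have "u0 @ concat ms @ uk @ [a] = u0 @ concat (ms @ [uk @ [a]]) @ []" by simp
    ultimately show ?thesis unfolding abelian_period_iff_decomposition by blast
  qed
qed

lemma count_lt_if_abelian_period_snoc:
  assumes w: "w = u0 @ concat ms @ uk" and d: "abelian_decomposition h p u0 ms uk"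
    and "abelian_period (w @ [a]) h p"
  shows "count_list uk a < count_list (last ms) a"
proof -
  obtain u0' ms' uk' where w': "w @ [a] = u0' @ concat ms' @ uk'"
    and d': "abelian_decomposition h p u0' ms' uk'"
    using assms(3) unfolding abelian_period_iff_decomposition by blast
  note decomp = abelian_decompositionD[OF d] and decomp' = abelian_decompositionD[OF d']
  note uni = abelian_decomposition_lengths(1)[OF d]
    and uni' = abelian_decomposition_lengths(1)[OF d']
  have blocks: "concat ms' @ uk' = concat ms @ uk @ [a]"
    using w w' decomp(1) decomp'(1) by simp
  have "hd ms' = take p (concat ms' @ uk')"
    using hd_concat_uniform[OF uni' decomp'(2)] length_concat_uniform_ge[OF uni' decomp'(2)]
    by simp
  also have "\<dots> = hd ms"
    using blocks hd_concat_uniform[OF uni decomp(2)] length_concat_uniform_ge[OF uni decomp(2)]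
    by simp
  finally have hd_eq: "hd ms' = hd ms" .
  have "length uk' = (length (w @ [a]) - h) mod p"
    by (rule abelian_decomposition_div_mod(2)[OF w' d'])
  moreover have "length uk = (length w - h) mod p"
    by (rule abelian_decomposition_div_mod(2)[OF w d])
  moreover have "length (w @ [a]) - h = Suc (length w - h)" using w decomp(1) by simp
  ultimately have luk': "length uk' = (if Suc (length uk) = p then 0 else Suc (length uk))"
    by (simp add: mod_Suc)
  have "parikh (last ms) = parikh (hd ms')"
    using decomp(4)[OF last_in_set[OF decomp(2)]] hd_eq by simp
  then have last_hd: "count_list (last ms) a = count_list (hd ms') a" by (metis parikh_def)
  show ?thesis
  proof (cases "Suc (length uk) = p")
    case True
    then have "concat ms' = concat ms @ uk @ [a]" using blocks luk' by simp
    then have "last ms' = uk @ [a]"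
      using last_concat_uniform[OF uni' decomp'(2)] True by simp
    moreover have "parikh (last ms') = parikh (hd ms')"
      by (rule decomp'(4)[OF last_in_set[OF decomp'(2)]])
    ultimately have "count_list (uk @ [a]) a = count_list (hd ms') a" by (metis parikh_def)
    then show ?thesis using last_hd by simp
  next
    case False
    then have "uk' = uk @ [a]" using blocks luk' by (simp add: append_eq_append_conv)
    then have "count_list (uk @ [a]) a \<le> count_list (hd ms') a"
      using count_list_le_if_parikh_sub[OF decomp'(6)] by blast
    then show ?thesis using last_hd by simp
  qed
qed

lemma abelian_period_snoc_iff:
  assumes "abelian_period w h p" and t: "t = (length w - h) mod p"
  shows "abelian_period (w @ [a]) h p \<longleftrightarrow>
    count_list (drop (length w - t) w) a
      < count_list (drop (length w - t - p) (take (length w - t) w)) a"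
proof -
  obtain u0 ms uk where w: "w = u0 @ concat ms @ uk" and d: "abelian_decomposition h p u0 ms uk"
    using assms(1) unfolding abelian_period_iff_decomposition by blast
  have "length uk = t" using abelian_decomposition_div_mod(2)[OF w d] t by simp
  then have "uk = drop (length w - t) w" and prefix: "take (length w - t) w = u0 @ concat ms"
    using w by simp_all
  moreover have "last ms = drop (length w - t - p) (take (length w - t) w)"
  proof -
    have uni: "\<forall>u\<in>set ms. length u = p" using abelian_decomposition_lengths(1)[OF d] .
    moreover have "ms \<noteq> []" by (rule abelian_decompositionD(2)[OF d])
    ultimately have "p \<le> length (concat ms)" by (rule length_concat_uniform_ge)
    then show ?thesis
      using prefix last_concat_uniform[OF uni \<open>ms \<noteq> []\<close>] \<open>length uk = t\<close> w by simp
  qed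
  ultimately show ?thesis
    using abelian_decomposition_snoc[OF d] count_lt_if_abelian_period_snoc[OF w d] w by auto
qed

lemma ap_less_chain_snd_mono:
  assumes chain: "\<forall>i. 1 \<le> i \<and> i < s \<longrightarrow> ap_less (h i, p i) (h (Suc i), p (Suc i))"
    and "1 \<le> i" and "i \<le> j" and "j \<le> s"
  shows "p i \<le> p j"
  using assms(3,4)
proof (induction j rule: dec_induct)
  case (step n)
  then have "p i \<le> p n" by simp
  moreover have "ap_less (h n, p n) (h (Suc n), p (Suc n))"
    using chain step \<open>1 \<le> i\<close> by simp
  ultimately show ?case by (auto simp: ap_less_def)
qed simp

theorem mainTheorem7:
  fixes w :: "'a list" and a :: 'a and h p :: "nat \<Rightarrow> nat" and s t :: nat
  assumes "s \<ge> 1"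
    and "\<forall>i. 1 \<le> i \<and> i < s \<longrightarrow> ap_less (h i, p i) (h (Suc i), p (Suc i))"
    and "\<forall>i. 1 \<le> i \<and> i \<le> s \<longrightarrow> abelian_period w (h i) (p i)"
    and "\<forall>i. 1 \<le> i \<and> i \<le> s \<longrightarrow> (length w - h i) mod p i = t"
    and "t > 0"
    and "abelian_period (w @ [a]) (h 1) (p 1)"
  shows "\<forall>i. 2 \<le> i \<and> i \<le> s \<longrightarrow> abelian_period (w @ [a]) (h i) (p i)"
proof (intro allI impI)
  fix i assume i: "2 \<le> i \<and> i \<le> s"
  let ?v = "take (length w - t) w"
  have "count_list (drop (length w - t) w) a < count_list (drop (length ?v - p 1) ?v) a"
    using abelian_period_snoc_iff[of w "h 1" "p 1" t a] assms(1,3,4,6) by simp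
  also have "\<dots> \<le> count_list (drop (length ?v - p i) ?v) a"
    using ap_less_chain_snd_mono[OF assms(2), of 1 i] i by (intro count_list_drop_antimono) simp
  finally show "abelian_period (w @ [a]) (h i) (p i)"
    using abelian_period_snoc_iff[of w "h i" "p i" t a] assms(3,4) i by simp
qed

end
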